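(* Let arbitrary values $\boldsymbol y^*_n\in\mathbb R^{MN}_+$ ($n\in\mathcal T$) and $u^*_n\in\mathbb R$ ($n\in\mathcal T\setminus\{1\}$) be given. Define $\boldsymbol x^{MS}_1=\lceil\boldsymbol B_{t_1}\boldsymbol y^*_1\rceil$, $\boldsymbol x^{MS}_n=\max_{m\in\mathcal P(n)}\lceil\boldsymbol B_{t_m}\boldsymbol y^*_m\rceil-\max_{m\in\mathcal P(a(n))}\lceil\boldsymbol B_{t_m}\boldsymbol y^*_m\rceil$ for $n\ne1$, $\eta^{MS}_n=\max_{m\in\mathcal C(n)}\{\boldsymbol f_{t_m}^{\mathsf T}\sum_{l\in\mathcal P(m)}\boldsymbol x^{MS}_l+\boldsymbol c_{t_m}^{\mathsf T}\boldsymbol y^*_m-u^*_m\}$ for $n\notin\mathcal L$, $\boldsymbol x^{TS}_1=\lceil\boldsymbol B_{t_1}\boldsymbol y^*_1\rceil$, $\boldsymbol x^{TS}_n=\max_{m\in\mathcal P(n)}\lceil\max_{l\in\mathcal T_{t_m}}\boldsymbol B_{t_l}\boldsymbol y^*_l\rceil-\max_{m\in\mathcal P(a(n))}\lceil\max_{l\in\mathcal T_{t_m}}\boldsymbol B_{t_l}\boldsymbol y^*_l\rceil$ for $n\ne1$, $\eta^{TS}_n=\max_{m\in\mathcal C(n)}\{\boldsymbol f_{t_m}^{\mathsf T}\sum_{l\in\mathcal P(m)}\boldsymbol x^{TS}_l+\boldsymbol c_{t_m}^{\mathsf T}\boldsymbol y^*_m-u^*_m\}$ for $n\notin\mathcal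 L$. Then $(\boldsymbol x^{MS},\eta^{MS})$ is an optimal solution of $\mathbf{SP\text{-}RMS}(\boldsymbol y^*,u^* )$ and $(\boldsymbol x^{TS},\eta^{TS})$ is an optimal solution of $\mathbf{SP\text{-}RTS}(\boldsymbol y^*,u^* )$; consequently $Q^M(\boldsymbol y^*,u^* )=\sum_{n\in\mathcal T}p_n\big(\tilde{\boldsymbol f}_n^{\mathsf T}\sum_{m\in\mathcal P(n)}\boldsymbol x^{MS}_m+\tilde\lambda_n\eta^{MS}_n\big)$ and $Q^T(\boldsymbol y^*,u^* )=\sum_{n\in\mathcal T}p_n\big(\tilde{\boldsymbol f}_n^{\mathsf T}\sum_{m\in\mathcal P(n)}\boldsymbol x^{TS}_m+\tilde\lambda_n\eta^{TS}_n\big)$.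
   Context: Setting. Fix integers $T\ge 2$, $M\ge1$, $N\ge1$. For each period $t$: maintenance costs $f_{ti}\ge 0$ forming $\boldsymbol f_t\in\mathbb R^M$; operational costs $c_{tij}\ge0$ forming $\boldsymbol c_t\in\mathbb R^{MN}$; capacities $h_{ti}>0$. $\boldsymbol B_t\in\mathbb R^{M\times MN}$ is the matrix with $(\boldsymbol B_t\boldsymbol y)_i=\frac1{h_{ti}}\sum_{j=1}^N y_{ij}$. Ceilings and maxima of vectors are taken componentwise. Scenario tree: a finite rooted tree with node set $\mathcal T$ and root $1$, all root-to-leaf paths having $T$ nodes; $\mathcal T_t$ is the set of nodes at depth $t$, $t_n$ the period of node $n$, $\mathcal L=\mathcal T_T$ the leaves, $a(n)$ the parent of $n\ne1$, $\mathcal C(n)$ the children of $n$, $\mathcal P(n)$ the set of nodes on the root-to-$n$ path (inclusive). Node probabilities $p_n>0$ satisfy $\sum_{n\in\mathcal T_t}p_n=1$ and $\sum_{m\in\mathcal C(n)}p_m=p_n$ for $n\notin\mathcal L$. Risk parameters $\lambda_t\in[0,1]$, $\alpha_t\in(0,1)$, $t=2,\ldots,T$. $\tilde{\boldsymbol f}_n=\boldsymbol f_{t_n}$ if $n=1$, else $(1-\lambda_{t_n})\boldsymbol f_{t_n}$; $\tilde\lambda_n=0$ if $n\in\mathcal L$, else $\lambda_{t_n+1}$. $\mathbf{SP\text{-}RMS}(\boldsymbol y^*,u^* )$: minimize $\sum_{n\in\mathcal T}p_n\big(\tilde{\boldsymbol f}_n^{\mathsf T}\sum_{m\in\mathcal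 P(n)}\boldsymbol x_m+\tilde\lambda_n\eta_n\big)$ over $\boldsymbol x_n\in\mathbb Z^M_+$ ($n\in\mathcal T$), $\eta_n\in\mathbb R$ ($n\notin\mathcal L$), subject to $\sum_{m\in\mathcal P(n)}\boldsymbol x_m\ge\boldsymbol B_{t_n}\boldsymbol y^*_n$ for all $n\in\mathcal T$ and $\eta_{a(n)}\ge\boldsymbol f_{t_n}^{\mathsf T}\sum_{m\in\mathcal P(n)}\boldsymbol x_m+\boldsymbol c_{t_n}^{\mathsf T}\boldsymbol y^*_n-u^*_n$ for all $n\ne1$. Its optimal value is $Q^M(\boldsymbol y^*,u^* )$. $\mathbf{SP\text{-}RTS}(\boldsymbol y^*,u^* )$: the same problem with the additional constraints $\boldsymbol x_m=\boldsymbol x_n$ for all $m,n\in\mathcal T_t$, $t=1,\ldots,T$. Its optimal value is $Q^T(\boldsymbol y^*,u^* )$. *)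

theory Defs
  imports Complex_Main
begin

(* Scenario tree: node set Tn (finite), rt, parent function par, period (depth)
   function dep with dep rt = 1, horizon TT.  Vectors in R^M / R^{MN} are
   functions of indices i < M, j < N. *)

definition path :: "('a \<Rightarrow> 'a) \<Rightarrow> ('a \<Rightarrow> nat) \<Rightarrow> 'a \<Rightarrow> 'a set" where
  "path par dep n = (\<lambda>k. (par ^^ k) n) ` {..<dep n}"

definition children :: "'a set \<Rightarrow> 'a \<Rightarrow> ('a \<Rightarrow> 'a) \<Rightarrow> 'a \<Rightarrow> 'a set" where
  "children Tn rt par n = {m \<in> Tn. m \<noteq> rt \<and> par m = n}"

definition level :: "'a set \<Rightarrow> ('a \<Rightarrow> nat) \<Rightarrow> nat \<Rightarrow> 'a set" where
  "level Tn dep t = {n \<in> Tn. dep n = t}"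

definition leaves :: "'a set \<Rightarrow> ('a \<Rightarrow> nat) \<Rightarrow> nat \<Rightarrow> 'a set" where
  "leaves Tn dep TT = level Tn dep TT"

definition scenario_tree :: "'a set \<Rightarrow> 'a \<Rightarrow> ('a \<Rightarrow> 'a) \<Rightarrow> ('a \<Rightarrow> nat) \<Rightarrow> nat \<Rightarrow> bool" where
  "scenario_tree Tn rt par dep TT \<longleftrightarrow>
     finite Tn \<and> rt \<in> Tn \<and> dep rt = 1 \<and>
     (\<forall>n\<in>Tn. 1 \<le> dep n \<and> dep n \<le> TT) \<and>
     (\<forall>n\<in>Tn. n \<noteq> rt \<longrightarrow> par n \<in> Tn \<and> dep n = Suc (dep (par n))) \<and>
     (\<forall>n\<in>Tn. dep n < TT \<longrightarrow> children Tn rt par n \<noteq> {})"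

definition node_probs :: "'a set \<Rightarrow> 'a \<Rightarrow> ('a \<Rightarrow> 'a) \<Rightarrow> ('a \<Rightarrow> nat) \<Rightarrow> nat \<Rightarrow> ('a \<Rightarrow> real) \<Rightarrow> bool" where
  "node_probs Tn rt par dep TT p \<longleftrightarrow>
     (\<forall>n\<in>Tn. p n > 0) \<and>
     (\<forall>t\<in>{1..TT}. (\<Sum>n\<in>level Tn dep t. p n) = 1) \<and>
     (\<forall>n\<in>Tn. n \<notin> leaves Tn dep TT \<longrightarrow> (\<Sum>m\<in>children Tn rt par n. p m) = p n)"

definition Bmat :: "(nat \<Rightarrow> nat \<Rightarrow> real) \<Rightarrow> nat \<Rightarrow> nat \<Rightarrow> (nat \<Rightarrow> nat \<Rightarrow> real) \<Rightarrow> nat \<Rightarrow> real" where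
  "Bmat h N t y i = (1 / h t i) * (\<Sum>j<N. y i j)"

definition cumx :: "('a \<Rightarrow> 'a) \<Rightarrow> ('a \<Rightarrow> nat) \<Rightarrow> ('a \<Rightarrow> nat \<Rightarrow> int) \<Rightarrow> 'a \<Rightarrow> nat \<Rightarrow> int" where
  "cumx par dep x n i = (\<Sum>m\<in>path par dep n. x m i)"

definition ftil :: "'a \<Rightarrow> ('a \<Rightarrow> nat) \<Rightarrow> (nat \<Rightarrow> nat \<Rightarrow> real) \<Rightarrow> (nat \<Rightarrow> real) \<Rightarrow> 'a \<Rightarrow> nat \<Rightarrow> real" where
  "ftil rt dep f lam n i = (if n = rt then f (dep n) i else (1 - lam (dep n)) * f (dep n) i)"

definition lamtil :: "'a set \<Rightarrow> ('a \<Rightarrow> nat) \<Rightarrow> nat \<Rightarrow> (nat \<Rightarrow> real) \<Rightarrow> 'a \<Rightarrow> real" where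
  "lamtil Tn dep TT lam n = (if n \<in> leaves Tn dep TT then 0 else lam (Suc (dep n)))"

definition sp_obj where
  "sp_obj Tn rt par dep TT M p f lam x eta =
     (\<Sum>n\<in>Tn. p n * ((\<Sum>i<M. ftil rt dep f lam n i * of_int (cumx par dep x n i))
                      + lamtil Tn dep TT lam n * eta n))"

definition stage_cost where
  "stage_cost par dep M N f c y u x n =
     (\<Sum>i<M. f (dep n) i * of_int (cumx par dep x n i))
     + (\<Sum>i<M. \<Sum>j<N. c (dep n) i j * y n i j) - u n"

definition feasible_RMS where
  "feasible_RMS Tn rt par dep M N f c h y u x (eta :: 'a \<Rightarrow> real) \<longleftrightarrow>
     (\<forall>n\<in>Tn. \<forall>i<M. x n i \<ge> 0) \<and>
     (\<forall>n\<in>Tn. \<forall>i<M. of_int (cumx par dep x n i) \<ge> Bmat h N (dep n) (y n) i) \<and>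
     (\<forall>n\<in>Tn. n \<noteq> rt \<longrightarrow> eta (par n) \<ge> stage_cost par dep M N f c y u x n)"

definition feasible_RTS where
  "feasible_RTS Tn rt par dep TT M N f c h y u x eta \<longleftrightarrow>
     feasible_RMS Tn rt par dep M N f c h y u x eta \<and>
     (\<forall>t\<in>{1..TT}. \<forall>m\<in>level Tn dep t. \<forall>n\<in>level Tn dep t. \<forall>i<M. x m i = x n i)"

definition optimal_RMS where
  "optimal_RMS Tn rt par dep TT M N p f c h lam y u x eta \<longleftrightarrow>
     feasible_RMS Tn rt par dep M N f c h y u x eta \<and>
     (\<forall>x' eta'. feasible_RMS Tn rt par dep M N f c h y u x' eta' \<longrightarrow>
        sp_obj Tn rt par dep TT M p f lam x eta \<le> sp_obj Tn rt par dep TT M p f lam x' eta')"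

definition optimal_RTS where
  "optimal_RTS Tn rt par dep TT M N p f c h lam y u x eta \<longleftrightarrow>
     feasible_RTS Tn rt par dep TT M N f c h y u x eta \<and>
     (\<forall>x' eta'. feasible_RTS Tn rt par dep TT M N f c h y u x' eta' \<longrightarrow>
        sp_obj Tn rt par dep TT M p f lam x eta \<le> sp_obj Tn rt par dep TT M p f lam x' eta')"

definition QM where
  "QM Tn rt par dep TT M N p f c h lam y u =
     Inf {sp_obj Tn rt par dep TT M p f lam x eta | x eta.
            feasible_RMS Tn rt par dep M N f c h y u x eta}"

definition QT where
  "QT Tn rt par dep TT M N p f c h lam y u =
     Inf {sp_obj Tn rt par dep TT M p f lam x eta | x eta.
            feasible_RTS Tn rt par dep TT M N f c h y u x eta}"

definition xMS where
  "xMS rt par dep h N y n i =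
     (if n = rt then \<lceil>Bmat h N (dep n) (y n) i\<rceil>
      else Max ((\<lambda>m. \<lceil>Bmat h N (dep m) (y m) i\<rceil>) ` path par dep n)
         - Max ((\<lambda>m. \<lceil>Bmat h N (dep m) (y m) i\<rceil>) ` path par dep (par n)))"

definition xTS where
  "xTS Tn rt par dep h N y n i =
     (if n = rt then \<lceil>Bmat h N (dep n) (y n) i\<rceil>
      else Max ((\<lambda>m. \<lceil>Max ((\<lambda>l. Bmat h N (dep l) (y l) i) ` level Tn dep (dep m))\<rceil>) ` path par dep n)
         - Max ((\<lambda>m. \<lceil>Max ((\<lambda>l. Bmat h N (dep l) (y l) i) ` level Tn dep (dep m))\<rceil>) ` path par dep (par n)))"

definition eta_of where
  "eta_of Tn rt par dep TT M N f c y u x n =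
     (if n \<in> leaves Tn dep TT then 0
      else Max ((\<lambda>m. stage_cost par dep M N f c y u x m) ` children Tn rt par n))"

end

theory Submission
  imports Defs
begin

(* Once the cumulative capacities X n = (sum over the path to n of x) are fixed, the objective is
   monotone in X: its weights are nonnegative, and the best eta at a node is the largest stage cost
   of its children, which is again monotone in X.  Feasibility forces the integral, nondecreasing
   X n above the ceiling of the requirement at every ancestor of n; under the time-stage constraints
   X n depends only on the period, so it even dominates the ceiling of the largest requirement of
   each earlier period.  The closed-form solutions are the increments of the running maxima of these
   bounds along the paths, so their cumulative capacities attain the bounds at every node. *)

lemma finite_path: "finite (path par dep n)"
  unfolding path_def by simp

lemma mem_path: "0 < dep n \<Longrightarrow> n \<in> path par dep n"
  unfolding path_def by (auto intro: image_eqI[where x = 0])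

locale rooted_scenario_tree =
  fixes Tn :: "'a set" and rt :: 'a and par :: "'a \<Rightarrow> 'a" and dep :: "'a \<Rightarrow> nat" and TT :: nat
  assumes tree: "scenario_tree Tn rt par dep TT"
begin

lemma finite_nodes: "finite Tn"
  and root_in: "rt \<in> Tn"
  and dep_root: "dep rt = 1"
  and dep_range: "n \<in> Tn \<Longrightarrow> dep n \<in> {1..TT}"
  and par_in: "n \<in> Tn \<Longrightarrow> n \<noteq> rt \<Longrightarrow> par n \<in> Tn"
  and dep_par: "n \<in> Tn \<Longrightarrow> n \<noteq> rt \<Longrightarrow> dep n = Suc (dep (par n))"
  and children_nonempty: "n \<in> Tn \<Longrightarrow> dep n < TT \<Longrightarrow> children Tn rt par n \<noteq> {}"
  using tree unfolding scenario_tree_def by auto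

lemma dep_nonroot: "n \<in> Tn \<Longrightarrow> n \<noteq> rt \<Longrightarrow> dep n \<in> {2..TT}"
  using dep_par dep_range par_in by fastforce

lemma dep_eq_1_iff: "n \<in> Tn \<Longrightarrow> dep n = 1 \<longleftrightarrow> n = rt"
  using dep_nonroot dep_root by fastforce

lemma level_1: "level Tn dep 1 = {rt}"
  using dep_eq_1_iff root_in unfolding level_def by blast

lemma node_induct [consumes 1, case_names root nonroot]:
  assumes "n \<in> Tn"
    and root: "P rt"
    and nonroot: "\<And>n. n \<in> Tn \<Longrightarrow> n \<noteq> rt \<Longrightarrow> P (par n) \<Longrightarrow> P n"
  shows "P n"
proof -
  have "\<forall>n\<in>Tn. dep n = d \<longrightarrow> P n" for d
  proof (induction d)
    case 0
    then show ?case using dep_range by fastforce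
  next
    case (Suc d)
    show ?case
    proof (intro ballI impI)
      fix n assume "n \<in> Tn" "dep n = Suc d"
      then show "P n"
        using root nonroot Suc.IH par_in dep_par by (cases "n = rt") auto
    qed
  qed
  with \<open>n \<in> Tn\<close> show ?thesis by blast
qed

lemma path_root: "path par dep rt = {rt}"
  unfolding path_def dep_root by (simp add: lessThan_Suc)

lemma path_nonroot:
  assumes "n \<in> Tn" "n \<noteq> rt"
  shows "path par dep n = insert n (path par dep (par n))"
proof -
  have "path par dep n = (\<lambda>k. (par ^^ k) n) ` insert 0 (Suc ` {..<dep (par n)})"
    unfolding path_def dep_par[OF assms] lessThan_Suc_eq_insert_0 ..
  also have "\<dots> = insert n ((\<lambda>k. (par ^^ k) (par n)) ` {..<dep (par n)})"
    by (simp add: image_image funpow_Suc_right del: funpow.simps)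
  finally show ?thesis unfolding path_def .
qed

lemma path_subset: "n \<in> Tn \<Longrightarrow> path par dep n \<subseteq> Tn"
  by (induction n rule: node_induct) (auto simp: path_root root_in path_nonroot)

lemma dep_image_path: "n \<in> Tn \<Longrightarrow> dep ` path par dep n = {1..dep n}"
proof (induction n rule: node_induct)
  case root
  show ?case by (simp add: path_root dep_root)
next
  case (nonroot n)
  then show ?case by (auto simp: path_nonroot dep_par)
qed

lemma mem_path_self: "n \<in> Tn \<Longrightarrow> n \<in> path par dep n"
  using dep_range by (intro mem_path) fastforce

lemma notin_path_par:
  assumes "n \<in> Tn" "n \<noteq> rt"
  shows "n \<notin> path par dep (par n)"
proof
  assume "n \<in> path par dep (par n)"
  then have "dep n \<in> {1..dep (par n)}"
    using dep_image_path[OF par_in[OF assms]] by blast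
  then show False using dep_par[OF assms] by simp
qed

lemma cumx_root: "cumx par dep x rt i = x rt i"
  unfolding cumx_def path_root by simp

lemma cumx_nonroot:
  assumes "n \<in> Tn" "n \<noteq> rt"
  shows "cumx par dep x n i = x n i + cumx par dep x (par n) i"
  unfolding cumx_def path_nonroot[OF assms]
  using notin_path_par[OF assms] by (simp add: finite_path)

lemma cumx_mono_path:
  assumes "\<And>m. m \<in> Tn \<Longrightarrow> 0 \<le> x m i"
  shows "n \<in> Tn \<Longrightarrow> m \<in> path par dep n \<Longrightarrow> cumx par dep x m i \<le> cumx par dep x n i"
proof (induction n rule: node_induct)
  case root
  then show ?case by (simp add: path_root)
next
  case (nonroot n)
  then show ?case using assms[of n] by (auto simp: path_nonroot cumx_nonroot)
qed

lemma finite_children: "finite (children Tn rt par n)"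
  using finite_nodes unfolding children_def by simp

lemma finite_level: "finite (level Tn dep t)"
  using finite_nodes unfolding level_def by simp

lemma dep_less_if_not_leaf: "n \<in> Tn \<Longrightarrow> n \<notin> leaves Tn dep TT \<Longrightarrow> dep n < TT"
  using dep_range unfolding leaves_def level_def by fastforce


end

definition path_max_increments ::
    "'a \<Rightarrow> ('a \<Rightarrow> 'a) \<Rightarrow> ('a \<Rightarrow> nat) \<Rightarrow> ('a \<Rightarrow> nat \<Rightarrow> int) \<Rightarrow> 'a \<Rightarrow> nat \<Rightarrow> int" where
  "path_max_increments rt par dep \<phi> n i =
     (if n = rt then \<phi> n i
      else Max ((\<lambda>m. \<phi> m i) ` path par dep n) - Max ((\<lambda>m. \<phi> m i) ` path par dep (par n)))"

lemma xMS_eq_path_max_increments: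
  "xMS rt par dep h N y = path_max_increments rt par dep (\<lambda>m i. \<lceil>Bmat h N (dep m) (y m) i\<rceil>)"
  by (simp add: fun_eq_iff xMS_def path_max_increments_def)

context rooted_scenario_tree
begin

lemma xTS_eq_path_max_increments:
  "xTS Tn rt par dep h N y = path_max_increments rt par dep
     (\<lambda>m i. \<lceil>Max ((\<lambda>l. Bmat h N (dep l) (y l) i) ` level Tn dep (dep m))\<rceil>)"
proof -
  have "level Tn dep (dep rt) = {rt}" using level_1 dep_root by simp
  then show ?thesis by (simp add: fun_eq_iff xTS_def path_max_increments_def)
qed

lemma Max_path_par_le:
  assumes "n \<in> Tn" "n \<noteq> rt"
  shows "Max (\<phi> ` path par dep (par n)) \<le> Max (\<phi> ` path par dep n)"
  using mem_path_self[OF par_in[OF assms]]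
  by (intro Max_mono) (auto simp: path_nonroot[OF assms] finite_path)

lemma cumx_path_max_increments:
  "n \<in> Tn \<Longrightarrow> cumx par dep (path_max_increments rt par dep \<phi>) n i = Max ((\<lambda>m. \<phi> m i) ` path par dep n)"
proof (induction n rule: node_induct)
  case root
  then show ?case by (simp add: cumx_root path_root path_max_increments_def)
next
  case (nonroot n)
  then show ?case by (simp add: cumx_nonroot path_max_increments_def)
qed

lemma path_max_increments_nonneg:
  assumes "0 \<le> \<phi> rt i" "n \<in> Tn"
  shows "0 \<le> path_max_increments rt par dep \<phi> n i"
  using assms Max_path_par_le[of n "\<lambda>m. \<phi> m i"] by (simp add: path_max_increments_def)

lemma path_max_increments_level_const:
  assumes depwise: "\<And>m. m \<in> Tn \<Longrightarrow> \<phi> m i = g (dep m)"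
    and "m \<in> level Tn dep t" "n \<in> level Tn dep t"
  shows "path_max_increments rt par dep \<phi> m i = path_max_increments rt par dep \<phi> n i"
proof -
  have "path_max_increments rt par dep \<phi> k i =
          (if t = 1 then \<phi> rt i else Max (g ` {1..t}) - Max (g ` {1..t - 1}))"
    if "k \<in> level Tn dep t" for k
  proof -
    have k: "k \<in> Tn" "dep k = t" using that unfolding level_def by auto
    have img: "(\<lambda>m. \<phi> m i) ` path par dep l = g ` {1..dep l}" if "l \<in> Tn" for l
    proof -
      have "(\<lambda>m. \<phi> m i) ` path par dep l = g ` dep ` path par dep l"
        using depwise path_subset[OF that] by (force simp: image_image)
      then show ?thesis using dep_image_path[OF that] by simp
    qed
    show ?thesis
    proof (cases "k = rt")
      case False
      have "dep (par k) = t - 1" using dep_par[OF k(1) False] k(2) by simp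
      then show ?thesis
        using False k dep_eq_1_iff[OF k(1)] img[OF k(1)] img[OF par_in[OF k(1) False]]
        by (simp add: path_max_increments_def)
    qed (use k dep_root in \<open>simp add: path_max_increments_def\<close>)
  qed
  then show ?thesis using assms(2,3) by simp
qed

lemma ceiling_Max_path_le_cumx:
  assumes x_nonneg: "\<And>m. m \<in> Tn \<Longrightarrow> 0 \<le> x m i"
    and bound: "\<And>m. m \<in> Tn \<Longrightarrow> b m \<le> of_int (cumx par dep x m i)"
    and "n \<in> Tn"
  shows "Max ((\<lambda>m. \<lceil>b m\<rceil>) ` path par dep n) \<le> cumx par dep x n i"
proof -
  have "\<lceil>b m\<rceil> \<le> cumx par dep x n i" if "m \<in> path par dep n" for m
  proof -
    have "m \<in> Tn" using path_subset[OF \<open>n \<in> Tn\<close>] that by blast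
    then have "\<lceil>b m\<rceil> \<le> cumx par dep x m i" using bound by (simp add: ceiling_le_iff)
    also have "\<dots> \<le> cumx par dep x n i" using cumx_mono_path[of x i, OF x_nonneg \<open>n \<in> Tn\<close> that] .
    finally show ?thesis .
  qed
  then show ?thesis using mem_path_self[OF \<open>n \<in> Tn\<close>] by (subst Max_le_iff) (auto simp: finite_path)
qed

lemma cumx_level_const:
  assumes level_const: "\<And>m n. m \<in> Tn \<Longrightarrow> n \<in> Tn \<Longrightarrow> dep m = dep n \<Longrightarrow> x m i = x n i"
  shows "n \<in> Tn \<Longrightarrow> n' \<in> Tn \<Longrightarrow> dep n' = dep n \<Longrightarrow> cumx par dep x n' i = cumx par dep x n i"
proof (induction n arbitrary: n' rule: node_induct)
  case root
  then show ?case using dep_eq_1_iff dep_root by simp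
next
  case (nonroot n)
  then have "n' \<noteq> rt" using dep_eq_1_iff dep_root by force
  have "cumx par dep x (par n') i = cumx par dep x (par n) i"
    using nonroot par_in[OF nonroot(4) \<open>n' \<noteq> rt\<close>] dep_par[OF nonroot(4) \<open>n' \<noteq> rt\<close>] dep_par[OF nonroot(1,2)]
    by simp
  then show ?case
    using nonroot level_const[of n' n] \<open>n' \<noteq> rt\<close> by (simp add: cumx_nonroot)
qed

lemma Max_level_Bmat_le_cumx:
  assumes feasible: "feasible_RTS Tn rt par dep TT M N f c h y u x eta"
    and n: "n \<in> Tn" and i: "i < M"
  shows "Max ((\<lambda>l. Bmat h N (dep l) (y l) i) ` level Tn dep (dep n)) \<le> of_int (cumx par dep x n i)"
proof -
  have x_level_const: "x m i = x l i" if "m \<in> Tn" "l \<in> Tn" "dep m = dep l" for m l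
  proof -
    have "m \<in> level Tn dep (dep m)" "l \<in> level Tn dep (dep m)" using that unfolding level_def by auto
    then show ?thesis using feasible i dep_range[OF that(1)] unfolding feasible_RTS_def by blast
  qed
  have "Bmat h N (dep l) (y l) i \<le> of_int (cumx par dep x n i)" if "l \<in> level Tn dep (dep n)" for l
  proof -
    have l: "l \<in> Tn" "dep l = dep n" using that unfolding level_def by auto
    have "Bmat h N (dep l) (y l) i \<le> of_int (cumx par dep x l i)"
      using feasible l(1) i unfolding feasible_RTS_def feasible_RMS_def by blast
    also have "cumx par dep x l i = cumx par dep x n i"
      using cumx_level_const[of x i, OF x_level_const n l] .
    finally show ?thesis .
  qed
  then show ?thesis
    using finite_level n by (subst Max_le_iff) (auto simp: level_def)
qed

lemma stage_cost_le_eta_of: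
  assumes "n \<in> Tn" "n \<noteq> rt"
  shows "stage_cost par dep M N f c y u x n \<le> eta_of Tn rt par dep TT M N f c y u x (par n)"
proof -
  have "par n \<notin> leaves Tn dep TT"
    using dep_par[OF assms] dep_range[OF assms(1)] unfolding leaves_def level_def by auto
  moreover have "n \<in> children Tn rt par (par n)"
    using assms unfolding children_def by simp
  ultimately show ?thesis
    unfolding eta_of_def using finite_children by simp
qed

lemma feasible_RMS_eta_of:
  assumes "\<forall>n\<in>Tn. \<forall>i<M. 0 \<le> x n i"
    and "\<forall>n\<in>Tn. \<forall>i<M. Bmat h N (dep n) (y n) i \<le> of_int (cumx par dep x n i)"
  shows "feasible_RMS Tn rt par dep M N f c h y u x (eta_of Tn rt par dep TT M N f c y u x)"
  using assms stage_cost_le_eta_of unfolding feasible_RMS_def by blast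

lemma feasible_RMS_ceiling_increments:
  fixes b :: "'a \<Rightarrow> nat \<Rightarrow> real"
  assumes root_nonneg: "\<And>i. i < M \<Longrightarrow> 0 \<le> b rt i"
    and Bmat_le: "\<And>n i. n \<in> Tn \<Longrightarrow> i < M \<Longrightarrow> Bmat h N (dep n) (y n) i \<le> b n i"
  defines "x \<equiv> path_max_increments rt par dep (\<lambda>m i. \<lceil>b m i\<rceil>)"
  shows "feasible_RMS Tn rt par dep M N f c h y u x (eta_of Tn rt par dep TT M N f c y u x)"
proof (rule feasible_RMS_eta_of)
  show "\<forall>n\<in>Tn. \<forall>i<M. 0 \<le> x n i"
  proof (intro ballI allI impI)
    fix n i assume n: "n \<in> Tn" and i: "i < M"
    have "0 \<le> \<lceil>b rt i\<rceil>" using root_nonneg[OF i] by simp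
    from this n show "0 \<le> x n i" unfolding x_def by (rule path_max_increments_nonneg)
  qed
  show "\<forall>n\<in>Tn. \<forall>i<M. Bmat h N (dep n) (y n) i \<le> of_int (cumx par dep x n i)"
  proof (intro ballI allI impI)
    fix n i assume n: "n \<in> Tn" and i: "i < M"
    have "Bmat h N (dep n) (y n) i \<le> of_int \<lceil>b n i\<rceil>"
      using Bmat_le[OF n i] le_of_int_ceiling order_trans by blast
    also have "\<lceil>b n i\<rceil> \<le> Max ((\<lambda>m. \<lceil>b m i\<rceil>) ` path par dep n)"
      using mem_path_self[OF n] by (simp add: finite_path)
    finally show "Bmat h N (dep n) (y n) i \<le> of_int (cumx par dep x n i)"
      unfolding x_def cumx_path_max_increments[OF n] by simp
  qed
qed

end

lemma QM_eq_if_optimal_RMS: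
  assumes "optimal_RMS Tn rt par dep TT M N p f c h lam y u x eta"
  shows "QM Tn rt par dep TT M N p f c h lam y u = sp_obj Tn rt par dep TT M p f lam x eta"
  unfolding QM_def using assms unfolding optimal_RMS_def by (intro cInf_eq_minimum) blast+

lemma QT_eq_if_optimal_RTS:
  assumes "optimal_RTS Tn rt par dep TT M N p f c h lam y u x eta"
  shows "QT Tn rt par dep TT M N p f c h lam y u = sp_obj Tn rt par dep TT M p f lam x eta"
  unfolding QT_def using assms unfolding optimal_RTS_def by (intro cInf_eq_minimum) blast+

lemma stage_cost_mono:
  fixes f :: "nat \<Rightarrow> nat \<Rightarrow> real"
  assumes "\<And>i. i < M \<Longrightarrow> 0 \<le> f (dep m) i"
    and "\<And>i. i < M \<Longrightarrow> cumx par dep x m i \<le> cumx par dep x' m i"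
  shows "stage_cost par dep M N f c y u x m \<le> stage_cost par dep M N f c y u x' m"
proof -
  have "(\<Sum>i<M. f (dep m) i * of_int (cumx par dep x m i))
      \<le> (\<Sum>i<M. f (dep m) i * of_int (cumx par dep x' m i))"
    using assms by (intro sum_mono mult_left_mono) auto
  then show ?thesis unfolding stage_cost_def by linarith
qed

locale capacity_problem = rooted_scenario_tree +
  fixes M :: nat and p :: "'a \<Rightarrow> real" and f :: "nat \<Rightarrow> nat \<Rightarrow> real" and lam :: "nat \<Rightarrow> real"
  assumes probs: "node_probs Tn rt par dep TT p"
    and f_nonneg: "\<And>t i. t \<in> {1..TT} \<Longrightarrow> i < M \<Longrightarrow> 0 \<le> f t i"
    and lam_range: "\<And>t. t \<in> {2..TT} \<Longrightarrow> 0 \<le> lam t \<and> lam t \<le> 1"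
begin

lemma ftil_nonneg: "n \<in> Tn \<Longrightarrow> i < M \<Longrightarrow> 0 \<le> ftil rt dep f lam n i"
  using f_nonneg[OF dep_range] lam_range[OF dep_nonroot] unfolding ftil_def by auto

lemma lamtil_nonneg:
  assumes "n \<in> Tn"
  shows "0 \<le> lamtil Tn dep TT lam n"
  using lam_range[of "Suc (dep n)"] dep_less_if_not_leaf[OF assms] dep_range[OF assms]
  unfolding lamtil_def by auto

lemma eta_of_le:
  assumes feasible: "feasible_RMS Tn rt par dep M N f c h y u x' eta'"
    and cumx_le: "\<And>n i. n \<in> Tn \<Longrightarrow> i < M \<Longrightarrow> cumx par dep x n i \<le> cumx par dep x' n i"
    and "n \<in> Tn" "n \<notin> leaves Tn dep TT"
  shows "eta_of Tn rt par dep TT M N f c y u x n \<le> eta' n"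
proof -
  have "stage_cost par dep M N f c y u x m \<le> eta' n" if "m \<in> children Tn rt par n" for m
  proof -
    have m: "m \<in> Tn" "m \<noteq> rt" "par m = n" using that unfolding children_def by auto
    have "stage_cost par dep M N f c y u x m \<le> stage_cost par dep M N f c y u x' m"
      using f_nonneg[OF dep_range[OF m(1)]] cumx_le[OF m(1)] by (rule stage_cost_mono)
    also have "\<dots> \<le> eta' n" using feasible m unfolding feasible_RMS_def by blast
    finally show ?thesis .
  qed
  moreover have "children Tn rt par n \<noteq> {}"
    using children_nonempty dep_less_if_not_leaf assms(3,4) by blast
  ultimately show ?thesis
    using assms(4) finite_children unfolding eta_of_def by simp
qed

lemma sp_obj_eta_of_le:
  assumes feasible: "feasible_RMS Tn rt par dep M N f c h y u x' eta'"
    and cumx_le: "\<And>n i. n \<in> Tn \<Longrightarrow> i < M \<Longrightarrow> cumx par dep x n i \<le> cumx par dep x' n i"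
  shows "sp_obj Tn rt par dep TT M p f lam x (eta_of Tn rt par dep TT M N f c y u x)
       \<le> sp_obj Tn rt par dep TT M p f lam x' eta'"
  unfolding sp_obj_def
proof (rule sum_mono, rule mult_left_mono[OF add_mono])
  fix n assume n: "n \<in> Tn"
  show "0 \<le> p n" using probs n unfolding node_probs_def by (simp add: less_imp_le)
  show "(\<Sum>i<M. ftil rt dep f lam n i * of_int (cumx par dep x n i))
      \<le> (\<Sum>i<M. ftil rt dep f lam n i * of_int (cumx par dep x' n i))"
    using ftil_nonneg[OF n] cumx_le[OF n] by (intro sum_mono mult_left_mono) auto
  show "lamtil Tn dep TT lam n * eta_of Tn rt par dep TT M N f c y u x n \<le> lamtil Tn dep TT lam n * eta' n"
    using lamtil_nonneg[OF n] eta_of_le[OF feasible cumx_le n]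
    by (cases "n \<in> leaves Tn dep TT") (auto simp: lamtil_def intro: mult_left_mono)
qed

lemma sp_obj_ceiling_increments_le:
  fixes b :: "'a \<Rightarrow> nat \<Rightarrow> real"
  assumes feasible: "feasible_RMS Tn rt par dep M N f c h y u x' eta'"
    and bound: "\<And>n i. n \<in> Tn \<Longrightarrow> i < M \<Longrightarrow> b n i \<le> of_int (cumx par dep x' n i)"
  defines "x \<equiv> path_max_increments rt par dep (\<lambda>m i. \<lceil>b m i\<rceil>)"
  shows "sp_obj Tn rt par dep TT M p f lam x (eta_of Tn rt par dep TT M N f c y u x)
       \<le> sp_obj Tn rt par dep TT M p f lam x' eta'"
proof (rule sp_obj_eta_of_le[OF feasible])
  fix n i assume n: "n \<in> Tn" and i: "i < M"
  have "\<And>m. m \<in> Tn \<Longrightarrow> 0 \<le> x' m i" using feasible i unfolding feasible_RMS_def by blast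
  then show "cumx par dep x n i \<le> cumx par dep x' n i"
    unfolding x_def cumx_path_max_increments[OF n]
    using bound i n by (intro ceiling_Max_path_le_cumx) auto
qed

lemma optimal_RMS_xMS:
  assumes root_nonneg: "\<And>i. i < M \<Longrightarrow> 0 \<le> Bmat h N (dep rt) (y rt) i"
  shows "optimal_RMS Tn rt par dep TT M N p f c h lam y u
           (xMS rt par dep h N y) (eta_of Tn rt par dep TT M N f c y u (xMS rt par dep h N y))"
proof -
  let ?x = "path_max_increments rt par dep (\<lambda>m i. \<lceil>Bmat h N (dep m) (y m) i\<rceil>)"
  have "feasible_RMS Tn rt par dep M N f c h y u ?x (eta_of Tn rt par dep TT M N f c y u ?x)"
    using root_nonneg by (rule feasible_RMS_ceiling_increments) simp_all
  moreover have "sp_obj Tn rt par dep TT M p f lam ?x (eta_of Tn rt par dep TT M N f c y u ?x)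
      \<le> sp_obj Tn rt par dep TT M p f lam x' eta'"
    if "feasible_RMS Tn rt par dep M N f c h y u x' eta'" for x' eta'
    by (rule sp_obj_ceiling_increments_le[OF that]) (use that in \<open>simp add: feasible_RMS_def\<close>)
  ultimately show ?thesis unfolding optimal_RMS_def xMS_eq_path_max_increments by blast
qed

lemma optimal_RTS_xTS:
  assumes root_nonneg: "\<And>i. i < M \<Longrightarrow> 0 \<le> Bmat h N (dep rt) (y rt) i"
  shows "optimal_RTS Tn rt par dep TT M N p f c h lam y u
           (xTS Tn rt par dep h N y) (eta_of Tn rt par dep TT M N f c y u (xTS Tn rt par dep h N y))"
proof -
  define level_Max where
    "level_Max t i = Max ((\<lambda>l. Bmat h N (dep l) (y l) i) ` level Tn dep t)" for t i
  let ?x = "path_max_increments rt par dep (\<lambda>m i. \<lceil>level_Max (dep m) i\<rceil>)"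
  have xTS_eq: "xTS Tn rt par dep h N y = ?x"
    unfolding xTS_eq_path_max_increments level_Max_def ..
  have Bmat_le: "Bmat h N (dep n) (y n) i \<le> level_Max (dep n) i" if "n \<in> Tn" for n i
    using that finite_level unfolding level_Max_def by (intro Max_ge) (auto simp: level_def)
  have "feasible_RMS Tn rt par dep M N f c h y u ?x (eta_of Tn rt par dep TT M N f c y u ?x)"
    using order_trans[OF root_nonneg Bmat_le[OF root_in]] Bmat_le
    by (rule feasible_RMS_ceiling_increments)
  moreover have "?x m i = ?x n i" if "m \<in> level Tn dep t" "n \<in> level Tn dep t" for m n t i
    by (rule path_max_increments_level_const[where g = "\<lambda>t. \<lceil>level_Max t i\<rceil>", OF _ that]) simp
  moreover have "sp_obj Tn rt par dep TT M p f lam ?x (eta_of Tn rt par dep TT M N f c y u ?x)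
      \<le> sp_obj Tn rt par dep TT M p f lam x' eta'"
    if feasible: "feasible_RTS Tn rt par dep TT M N f c h y u x' eta'" for x' eta'
  proof (rule sp_obj_ceiling_increments_le)
    show "feasible_RMS Tn rt par dep M N f c h y u x' eta'"
      using feasible unfolding feasible_RTS_def by blast
    fix n i assume "n \<in> Tn" "i < M"
    with feasible show "level_Max (dep n) i \<le> of_int (cumx par dep x' n i)"
      unfolding level_Max_def by (rule Max_level_Bmat_le_cumx)
  qed
  ultimately show ?thesis unfolding optimal_RTS_def feasible_RTS_def xTS_eq by blast
qed

end

lemma Bmat_nonneg:
  assumes "0 < h t i" "\<And>j. j < N \<Longrightarrow> 0 \<le> y i j"
  shows "0 \<le> Bmat h N t y i"
  unfolding Bmat_def using assms by (intro mult_nonneg_nonneg sum_nonneg) auto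

theorem proposition2:
  fixes Tn :: "'a set" and rt :: 'a and par :: "'a \<Rightarrow> 'a" and dep :: "'a \<Rightarrow> nat"
    and TT M N :: nat and p :: "'a \<Rightarrow> real"
    and f :: "nat \<Rightarrow> nat \<Rightarrow> real" and c :: "nat \<Rightarrow> nat \<Rightarrow> nat \<Rightarrow> real"
    and h :: "nat \<Rightarrow> nat \<Rightarrow> real" and lam alpha :: "nat \<Rightarrow> real"
    and y :: "'a \<Rightarrow> nat \<Rightarrow> nat \<Rightarrow> real" and u :: "'a \<Rightarrow> real"
  assumes "TT \<ge> 2" and "M \<ge> 1" and "N \<ge> 1"
    and tree: "scenario_tree Tn rt par dep TT"
    and probs: "node_probs Tn rt par dep TT p"
    and f_nonneg: "\<And>t i. t \<in> {1..TT} \<Longrightarrow> i < M \<Longrightarrow> f t i \<ge> 0"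
    and c_nonneg: "\<And>t i j. t \<in> {1..TT} \<Longrightarrow> i < M \<Longrightarrow> j < N \<Longrightarrow> c t i j \<ge> 0"
    and h_pos: "\<And>t i. t \<in> {1..TT} \<Longrightarrow> i < M \<Longrightarrow> h t i > 0"
    and lam: "\<And>t. t \<in> {2..TT} \<Longrightarrow> 0 \<le> lam t \<and> lam t \<le> 1"
    and alpha: "\<And>t. t \<in> {2..TT} \<Longrightarrow> 0 < alpha t \<and> alpha t < 1"
    and y_nonneg: "\<And>n i j. n \<in> Tn \<Longrightarrow> i < M \<Longrightarrow> j < N \<Longrightarrow> y n i j \<ge> 0"
  shows "optimal_RMS Tn rt par dep TT M N p f c h lam y u
           (xMS rt par dep h N y)
           (eta_of Tn rt par dep TT M N f c y u (xMS rt par dep h N y))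
       \<and> optimal_RTS Tn rt par dep TT M N p f c h lam y u
           (xTS Tn rt par dep h N y)
           (eta_of Tn rt par dep TT M N f c y u (xTS Tn rt par dep h N y))
       \<and> QM Tn rt par dep TT M N p f c h lam y u
           = sp_obj Tn rt par dep TT M p f lam (xMS rt par dep h N y)
               (eta_of Tn rt par dep TT M N f c y u (xMS rt par dep h N y))
       \<and> QT Tn rt par dep TT M N p f c h lam y u
           = sp_obj Tn rt par dep TT M p f lam (xTS Tn rt par dep h N y)
               (eta_of Tn rt par dep TT M N f c y u (xTS Tn rt par dep h N y))"
proof -
  interpret capacity_problem Tn rt par dep TT M p f lam
    using tree probs f_nonneg lam by unfold_locales
  have root_nonneg: "0 \<le> Bmat h N (dep rt) (y rt) i" if "i < M" for i
    using h_pos[OF dep_range[OF root_in] that] y_nonneg[OF root_in that] by (rule Bmat_nonneg)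
  show ?thesis
    using optimal_RMS_xMS[where y = y, OF root_nonneg] optimal_RTS_xTS[where y = y, OF root_nonneg]
    by (simp add: QM_eq_if_optimal_RMS QT_eq_if_optimal_RTS)
qed

end
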